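(* Let $K=\mathbb{Q}(\zeta)$ be a cubic field, where $\zeta$ is a root of $\mathcal{C}(x,1)$ and $\mathcal{C}=(a,b,c,d)$ is the canonical binary cubic form of $K$. Let $\rho=a\zeta$ and $\omega=a\zeta^2+b\zeta$, so that $\mathcal{O}_K=\mathbb{Z}+\mathbb{Z}\rho+\mathbb{Z}\omega$. For $\alpha=u+x\rho+y\omega$ with $u,x,y\in\mathbb{Q}$ define \[ N(\alpha)=\begin{pmatrix} u & -ad\,y & -ad\,x-bd\,y\\ x & u-bx-cy & -cx-dy\\ y & ax & u-cy\end{pmatrix}. \] Let $M_{\mathbb{Z}}$ (resp. $M_{\mathbb{Q}}$) be the set of all matrices of this form with $u,x,y\in\mathbb{Z}$ (resp. $u,x,y\in\mathbb{Q}$). Then $\phi:\mathcal{O}_K\to M_{\mathbb{Z}}$, $\alpha\mapsto N(\alpha)$, is a ring isomorphism and $\psi:K\to M_{\mathbb{Q}}$, $\alpha\mapsto N(\alpha)$, is a field isomorphism (with the usual matrix addition and multiplication). Moreover, for every $\alpha\in K$, the trace of $\alpha$ equals the trace of $N(\alpha)$ and the norm of $\alpha$ equals $\det N(\alpha)$.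
   Context: A binary cubic form is $\mathcal{C}(x,y)=ax^3+bx^2y+cxy^2+dy^3$ with $a,b,c,d\in\mathbb{Z}$, irreducible over $\mathbb{Q}$, abbreviated $(a,b,c,d)$; its discriminant is $b^2c^2+18abcd-4ac^3-4b^3d-27a^2d^2$. The Davenport–Heilbronn map sends (the conjugacy class of) a cubic field $L$ with integral basis $\{1,\omega_2,\omega_3\}$ to the $\mathrm{GL}_2(\mathbb{Z})$-class of the form $\frac{1}{\mathrm{disc}(L)}N\big((\omega_2-\omega_2')x-(\omega_3-\omega_3')y\big)$, giving a bijection between cubic fields (up to conjugacy) and certain $\mathrm{GL}_2(\mathbb{Z})$-classes of binary cubic forms of the same discriminant. The canonical binary cubic form of a cubic field $K$ is a binary cubic form $\mathcal{C}$ in the image of the Davenport–Heilbronn map corresponding to $K$, with discriminant equal to that of $K$ and with $K=\mathbb{Q}(\zeta)$, $\mathcal{C}(\zeta,1)=0$; for such $\mathcal{C}$, $\{1,a\zeta,a\zeta^2+b\zeta\}$ is an integral basis of $\mathcal{O}_K$ (Belabas). *)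

theory Defs
  imports "HOL-Analysis.Analysis" "HOL-Computational_Algebra.Polynomial" "HOL-Library.Numeral_Type"
begin

definition cubic_poly :: "int \<Rightarrow> int \<Rightarrow> int \<Rightarrow> int \<Rightarrow> rat poly" where
  "cubic_poly a b c d = [:of_int d, of_int c, of_int b, of_int a:]"

definition is_subfield :: "complex set \<Rightarrow> bool" where
  "is_subfield S \<longleftrightarrow> 0 \<in> S \<and> 1 \<in> S \<and> (\<forall>x\<in>S. \<forall>y\<in>S. x + y \<in> S \<and> x * y \<in> S)
     \<and> (\<forall>x\<in>S. - x \<in> S \<and> inverse x \<in> S)"

definition Qadj :: "complex \<Rightarrow> complex set" where
  "Qadj z = \<Inter>{S. is_subfield S \<and> z \<in> S}"

definition ring_of_integers :: "complex set \<Rightarrow> complex set" where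
  "ring_of_integers K = {z \<in> K. algebraic_int z}"

definition embeddings :: "complex set \<Rightarrow> (complex \<Rightarrow> complex) set" where
  "embeddings K = {\<sigma>. \<sigma> 1 = 1 \<and> (\<forall>x\<in>K. \<forall>y\<in>K. \<sigma> (x + y) = \<sigma> x + \<sigma> y \<and> \<sigma> (x * y) = \<sigma> x * \<sigma> y)
     \<and> (\<forall>x. x \<notin> K \<longrightarrow> \<sigma> x = 0)}"

definition field_trace :: "complex set \<Rightarrow> complex \<Rightarrow> complex" where
  "field_trace K \<alpha> = (\<Sum>\<sigma>\<in>embeddings K. \<sigma> \<alpha>)"

definition field_norm :: "complex set \<Rightarrow> complex \<Rightarrow> complex" where
  "field_norm K \<alpha> = (\<Prod>\<sigma>\<in>embeddings K. \<sigma> \<alpha>)"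

definition Nmat :: "int \<Rightarrow> int \<Rightarrow> int \<Rightarrow> int \<Rightarrow> rat \<Rightarrow> rat \<Rightarrow> rat \<Rightarrow> rat^3^3" where
  "Nmat a b c d u x y = (let A = of_int a; B = of_int b; C = of_int c; D = of_int d;
     row1 = [u, - A*D*y, - A*D*x - B*D*y];
     row2 = [x, u - B*x - C*y, - C*x - D*y];
     row3 = [y, A*x, u - C*y];
     idx = (\<lambda>i::3. if i = 1 then 0 else if i = 2 then 1 else (2::nat))
   in (\<chi> i j. ([row1, row2, row3] ! idx i) ! idx j))"

definition coords :: "int \<Rightarrow> int \<Rightarrow> complex \<Rightarrow> complex \<Rightarrow> rat \<times> rat \<times> rat" where
  "coords a b \<zeta> \<alpha> = (THE (u, x, y). \<alpha> = of_rat u + of_rat x * (of_int a * \<zeta>)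
       + of_rat y * (of_int a * \<zeta>^2 + of_int b * \<zeta>))"

definition Nof :: "int \<Rightarrow> int \<Rightarrow> int \<Rightarrow> int \<Rightarrow> complex \<Rightarrow> complex \<Rightarrow> rat^3^3" where
  "Nof a b c d \<zeta> \<alpha> = (case coords a b \<zeta> \<alpha> of (u, x, y) \<Rightarrow> Nmat a b c d u x y)"

end

(*
  Write alpha = u + x rho + y omega. From C(zeta,1) = 0 one gets the multiplication table
  rho^2 = -b rho + a omega, rho omega = -ad - c rho, omega^2 = -bd - d rho - c omega, so N(alpha) is
  the matrix of multiplication by alpha in the basis 1, rho, omega; hence alpha -> N(alpha) is additive
  and multiplicative. Irreducibility of C(x,1) over Q makes 1, zeta, zeta^2 linearly independent (so
  coordinates are unique and Q + Q rho + Q omega is already a field, namely Q(zeta)) and makes C(x,1)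
  separable, so its three distinct complex roots r_i correspond to the three embeddings zeta -> r_i.
  Trace and norm of alpha are then the elementary symmetric expressions in the conjugates
  u + x a r_i + y (a r_i^2 + b r_i), which Vieta's formulas turn into trace and determinant of N(alpha).
*)
theory Submission
  imports Defs "HOL-Computational_Algebra.Polynomial_Factorial" "HOL-Computational_Algebra.Field_as_Ring"
    "HOL-Computational_Algebra.Fundamental_Theorem_Algebra"
begin

section \<open>Rational polynomials at a root of an irreducible polynomial\<close>

lemma map_poly_of_rat_add [simp]:
  "map_poly of_rat (p + q) = (map_poly of_rat p + map_poly of_rat q :: 'a::field_char_0 poly)"
  by (rule poly_eqI) (simp add: coeff_map_poly of_rat_add)

lemma map_poly_of_rat_mult [simp]:
  "map_poly of_rat (p * q) = (map_poly of_rat p * map_poly of_rat q :: 'a::field_char_0 poly)"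
  by (induction p) (simp_all add: map_poly_pCons map_poly_smult of_rat_mult)

lemma irreducible_bezout_one:
  fixes f g :: "'a::field_gcd poly"
  assumes "irreducible f" "\<not> f dvd g"
  obtains s t where "s * f + t * g = 1"
proof -
  have "coprime f g"
    using assms by (simp add: prime_elem_imp_coprime prime_elem_iff_irreducible)
  then show ?thesis
    using that bezout_coefficients_fst_snd[of f g] by simp
qed

lemma invertible_at_root_of_irreducible:
  fixes z :: "'a::field_char_0"
  assumes "irreducible f" "poly (map_poly of_rat f) z = 0" "\<not> f dvd g"
  obtains h where "poly (map_poly of_rat h) z * poly (map_poly of_rat g) z = 1"
proof -
  obtain s t where st: "s * f + t * g = 1"
    using irreducible_bezout_one[OF assms(1,3)] .
  have "poly (map_poly of_rat (s * f + t * g)) z = (1 :: 'a)"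
    unfolding st by simp
  then have "poly (map_poly of_rat t) z * poly (map_poly of_rat g) z = 1"
    using assms(2) by simp
  then show ?thesis
    by (rule that)
qed

lemma inverse_at_root_of_irreducible:
  fixes z :: "'a::field_char_0"
  assumes "irreducible f" "poly (map_poly of_rat f) z = 0" "poly (map_poly of_rat g) z \<noteq> 0"
  obtains h where "poly (map_poly of_rat h) z * poly (map_poly of_rat g) z = 1"
proof (rule invertible_at_root_of_irreducible[OF assms(1,2)])
  show "\<not> f dvd g"
  proof
    assume "f dvd g"
    then obtain k where "g = f * k" ..
    then show False
      using assms(2,3) by simp
  qed
qed

lemma nonzero_at_root_of_irreducible:
  fixes z :: "'a::field_char_0"
  assumes "irreducible f" "poly (map_poly of_rat f) z = 0" "g \<noteq> 0" "degree g < degree f"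
  shows "poly (map_poly of_rat g) z \<noteq> 0"
proof -
  have "\<not> f dvd g"
    using assms(3,4) by (metis dvd_imp_degree_le not_le)
  then obtain h where "poly (map_poly of_rat h) z * poly (map_poly of_rat g) z = 1"
    by (rule invertible_at_root_of_irreducible[OF assms(1,2)])
  then show ?thesis
    by force
qed

lemma poly_map_poly_of_rat_mem:
  fixes S :: "'a::field_char_0 set"
  assumes "\<And>q. of_rat q \<in> S" "z \<in> S"
    and "\<And>v w. v \<in> S \<Longrightarrow> w \<in> S \<Longrightarrow> v + w \<in> S" "\<And>v w. v \<in> S \<Longrightarrow> w \<in> S \<Longrightarrow> v * w \<in> S"
  shows "poly (map_poly of_rat p) z \<in> S"
  using assms(1)[of 0] by (induction p) (simp_all add: map_poly_pCons assms)

section \<open>Subfields of the complex numbers and their embeddings\<close>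

lemma subfield_of_int:
  assumes "is_subfield S"
  shows "of_int n \<in> S"
proof -
  have "of_nat m \<in> S" for m
    by (induction m) (use assms in \<open>simp_all add: is_subfield_def\<close>)
  then show ?thesis
    using assms by (cases n rule: int_cases) (simp_all add: is_subfield_def del: of_nat_Suc)
qed

lemma subfield_of_rat:
  assumes "is_subfield S"
  shows "of_rat q \<in> S"
proof -
  obtain n m where "q = of_int n / of_int m"
    by (metis quotient_of_div surj_pair)
  then have "of_rat q = (of_int n / of_int m :: complex)"
    by (simp add: of_rat_divide)
  then show ?thesis
    using assms subfield_of_int[OF assms] by (simp add: is_subfield_def divide_inverse)
qed

lemma subfield_poly_of_rat:
  assumes "is_subfield S" "z \<in> S"
  shows "poly (map_poly of_rat p) z \<in> S"
  using assms by (intro poly_map_poly_of_rat_mem) (auto simp: subfield_of_rat is_subfield_def)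

context
  fixes S \<sigma>
  assumes subfield: "is_subfield S" and embedding: "\<sigma> \<in> embeddings S"
begin

lemma embedding_add: "v \<in> S \<Longrightarrow> w \<in> S \<Longrightarrow> \<sigma> (v + w) = \<sigma> v + \<sigma> w"
  and embedding_mult: "v \<in> S \<Longrightarrow> w \<in> S \<Longrightarrow> \<sigma> (v * w) = \<sigma> v * \<sigma> w"
  and embedding_1: "\<sigma> 1 = 1"
  and embedding_outside: "v \<notin> S \<Longrightarrow> \<sigma> v = 0"
  using embedding by (auto simp: embeddings_def)

lemma embedding_0: "\<sigma> 0 = 0"
  using embedding_add[of 0 0] subfield by (simp add: is_subfield_def)

lemma embedding_uminus: "v \<in> S \<Longrightarrow> \<sigma> (- v) = - \<sigma> v"
  using embedding_add[of v "- v"] subfield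
  by (simp add: is_subfield_def embedding_0 eq_neg_iff_add_eq_0 add.commute)

lemma embedding_of_int: "\<sigma> (of_int n) = of_int n"
proof -
  have "\<sigma> (of_nat m) = of_nat m" for m
  proof (induction m)
    case (Suc m)
    have "\<sigma> (1 + of_nat m) = 1 + of_nat m"
      using embedding_add[of 1 "of_nat m"] subfield_of_int[OF subfield, of 1]
        subfield_of_int[OF subfield, of "int m"] Suc by (simp add: embedding_1)
    then show ?case
      by simp
  qed (simp add: embedding_0)
  moreover have "of_nat m \<in> S" for m
    using subfield_of_int[OF subfield, of "int m"] by simp
  ultimately show ?thesis
    by (cases n rule: int_cases) (simp_all add: embedding_uminus del: of_nat_Suc)
qed

lemma embedding_of_rat: "\<sigma> (of_rat q) = of_rat q"
proof -
  obtain n m where q: "q = of_int n / of_int m" and "m > 0"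
    by (metis quotient_of_denom_pos quotient_of_div surj_pair)
  have "\<sigma> (of_rat q) * of_int m = \<sigma> (of_rat q * of_int m)"
    using embedding_mult subfield_of_rat[OF subfield] subfield_of_int[OF subfield]
    by (simp add: embedding_of_int)
  also have "of_rat q * of_int m = (of_int n :: complex)"
    using \<open>m > 0\<close> by (simp add: q of_rat_divide)
  also have "\<sigma> (of_int n) = of_rat q * of_int m"
    using \<open>m > 0\<close> by (simp add: embedding_of_int q of_rat_divide)
  finally show ?thesis
    using \<open>m > 0\<close> by simp
qed

lemma embedding_poly_of_rat:
  assumes "z \<in> S"
  shows "\<sigma> (poly (map_poly of_rat p) z) = poly (map_poly of_rat p) (\<sigma> z)"
proof (induction p)
  case (pCons c p)
  have "poly (map_poly of_rat p) z \<in> S"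
    using subfield_poly_of_rat[OF subfield assms] .
  then show ?case
    using pCons assms subfield subfield_of_rat[OF subfield]
    by (simp add: map_poly_pCons embedding_add embedding_mult embedding_of_rat is_subfield_def)
qed (simp add: embedding_0)

end

section \<open>The multiplication matrix of a binary cubic form\<close>

locale binary_cubic_form =
  fixes a b c d :: int
begin

definition cubic_roots :: "complex set" where
  "cubic_roots = {z. of_int a * z^3 + of_int b * z^2 + of_int c * z + of_int d = 0}"

definition from_coords :: "complex \<Rightarrow> rat \<Rightarrow> rat \<Rightarrow> rat \<Rightarrow> complex" where
  "from_coords z u x y = of_rat u + of_rat x * (of_int a * z) + of_rat y * (of_int a * z^2 + of_int b * z)"

lemma cubic_roots_iff_poly: "z \<in> cubic_roots \<longleftrightarrow> poly (map_poly of_rat (cubic_poly a b c d)) z = 0"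
  by (simp add: cubic_roots_def cubic_poly_def map_poly_pCons algebra_simps power2_eq_square
      power3_eq_cube)

lemma Nmat_entries [simp]:
  "Nmat a b c d u x y $ 1 $ 1 = u"
  "Nmat a b c d u x y $ 1 $ 2 = - of_int a * of_int d * y"
  "Nmat a b c d u x y $ 1 $ 3 = - of_int a * of_int d * x - of_int b * of_int d * y"
  "Nmat a b c d u x y $ 2 $ 1 = x"
  "Nmat a b c d u x y $ 2 $ 2 = u - of_int b * x - of_int c * y"
  "Nmat a b c d u x y $ 2 $ 3 = - of_int c * x - of_int d * y"
  "Nmat a b c d u x y $ 3 $ 1 = y"
  "Nmat a b c d u x y $ 3 $ 2 = of_int a * x"
  "Nmat a b c d u x y $ 3 $ 3 = u - of_int c * y"
  by (simp_all add: Nmat_def Let_def)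

lemma Nmat_inject: "Nmat a b c d u x y = Nmat a b c d u' x' y' \<longleftrightarrow> u = u' \<and> x = x' \<and> y = y'"
  by (metis Nmat_entries(1,4,7))

lemma Nmat_add: "Nmat a b c d u x y + Nmat a b c d u' x' y' = Nmat a b c d (u + u') (x + x') (y + y')"
  by (simp add: vec_eq_iff forall_3 algebra_simps)

lemma Nmat_mult:
  fixes u x y u' x' y' :: rat
  defines "M \<equiv> Nmat a b c d u x y ** Nmat a b c d u' x' y'"
  shows "M = Nmat a b c d (M $ 1 $ 1) (M $ 2 $ 1) (M $ 3 $ 1)"
  unfolding M_def by (simp add: vec_eq_iff forall_3 matrix_matrix_mult_def sum_3 algebra_simps)

lemma Nmat_1: "Nmat a b c d 1 0 0 = mat 1"
  by (simp add: vec_eq_iff forall_3 mat_def)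

lemma from_coords_as_poly:
  "from_coords z u x y = poly (map_poly of_rat [:u, of_int a * x + of_int b * y, of_int a * y:]) z"
  by (simp add: from_coords_def map_poly_pCons of_rat_add of_rat_mult algebra_simps power2_eq_square)

lemma from_coords_add:
  "from_coords z u x y + from_coords z u' x' y' = from_coords z (u + u') (x + x') (y + y')"
  by (simp add: from_coords_def of_rat_add algebra_simps)

lemma from_coords_diff:
  "from_coords z u x y - from_coords z u' x' y' = from_coords z (u - u') (x - x') (y - y')"
  by (simp add: from_coords_def of_rat_diff algebra_simps)

text \<open>The coordinates of \<open>\<alpha>\<beta>\<close> are \<open>N(\<alpha>)\<close> applied to those of \<open>\<beta>\<close>, i.e. the first column
  of \<open>N(\<alpha>) N(\<beta>)\<close>.\<close>

lemma from_coords_mult: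
  fixes u x y u' x' y' :: rat
  assumes "z \<in> cubic_roots"
  defines "M \<equiv> Nmat a b c d u x y ** Nmat a b c d u' x' y'"
  shows "from_coords z u x y * from_coords z u' x' y' = from_coords z (M $ 1 $ 1) (M $ 2 $ 1) (M $ 3 $ 1)"
proof -
  have "from_coords z u x y * from_coords z u' x' y' - from_coords z (M $ 1 $ 1) (M $ 2 $ 1) (M $ 3 $ 1)
      = (of_rat (x * y' + y * x') * of_int a + of_rat (y * y') * (of_int a * z + of_int b))
        * (of_int a * z^3 + of_int b * z^2 + of_int c * z + of_int d)"
    unfolding M_def
    by (simp add: from_coords_def matrix_matrix_mult_def sum_3 of_rat_add of_rat_mult of_rat_diff
        of_rat_minus power2_eq_square power3_eq_cube algebra_simps)
  then show ?thesis
    using assms(1) by (simp add: cubic_roots_def)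
qed

context
  fixes r1 r2 r3 :: complex
  assumes Vieta: "of_int b = - of_int a * (r1 + r2 + r3)" "of_int c = of_int a * (r1 * r2 + r1 * r3 + r2 * r3)"
    "of_int d = - of_int a * r1 * r2 * r3"
begin

lemma from_coords_sum_Vieta:
  "from_coords r1 u x y + from_coords r2 u x y + from_coords r3 u x y = of_rat (trace (Nmat a b c d u x y))"
  unfolding trace_def sum_3 from_coords_def
  by (simp add: of_rat_add of_rat_mult of_rat_diff of_rat_minus Vieta algebra_simps power2_eq_square)

lemma from_coords_prod_Vieta:
  "from_coords r1 u x y * from_coords r2 u x y * from_coords r3 u x y = of_rat (det (Nmat a b c d u x y))"
  unfolding det_3 from_coords_def
  by (simp add: of_rat_add of_rat_mult of_rat_diff of_rat_minus Vieta algebra_simps power2_eq_square)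

end

end

section \<open>The cubic field \<open>\<rat>(\<zeta>)\<close>\<close>

lemma cubic_Vieta:
  fixes A B C D :: complex
  assumes "A \<noteq> 0"
  obtains r1 r2 r3 where "B = - A * (r1 + r2 + r3)" "C = A * (r1 * r2 + r1 * r3 + r2 * r3)"
    "D = - A * r1 * r2 * r3"
proof -
  obtain r where "smult (lead_coeff [:D, C, B, A:]) (\<Prod>i<degree [:D, C, B, A:]. [:- r i, 1:])
      = [:D, C, B, A:]"
    by (rule complex_poly_decompose')
  then have factors: "smult A ([:- r 0, 1:] * [:- r 1, 1:] * [:- r 2, 1:]) = [:D, C, B, A:]"
    using assms by (simp add: eval_nat_numeral lessThan_Suc mult_ac)
  have "[:D, C, B, A:] = [:- A * r 0 * r 1 * r 2, A * (r 0 * r 1 + r 0 * r 2 + r 1 * r 2),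
      - A * (r 0 + r 1 + r 2), A:]"
    unfolding factors[symmetric] by (simp add: algebra_simps)
  then show ?thesis
    by (intro that[of "r 0" "r 1" "r 2"]) simp_all
qed

locale cubic_field = binary_cubic_form +
  fixes \<zeta> :: complex
  assumes a_nonzero: "a \<noteq> 0"
    and irreducible: "irreducible (cubic_poly a b c d)"
    and root: "of_int a * \<zeta>^3 + of_int b * \<zeta>^2 + of_int c * \<zeta> + of_int d = 0"
begin

lemma zeta_in_cubic_roots: "\<zeta> \<in> cubic_roots"
  using root by (simp add: cubic_roots_def)

lemma degree_cubic_poly: "degree (cubic_poly a b c d) = 3"
  using a_nonzero by (simp add: cubic_poly_def)

lemma from_coords_eq_0_iff:
  assumes "z \<in> cubic_roots"
  shows "from_coords z u x y = 0 \<longleftrightarrow> u = 0 \<and> x = 0 \<and> y = 0"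
proof
  assume zero: "from_coords z u x y = 0"
  have "[:u, of_int a * x + of_int b * y, of_int a * y:] = 0"
  proof (rule ccontr)
    assume "[:u, of_int a * x + of_int b * y, of_int a * y:] \<noteq> 0"
    moreover have "degree [:u, of_int a * x + of_int b * y, of_int a * y:] < degree (cubic_poly a b c d)"
      by (simp add: degree_cubic_poly degree_pCons_eq_if)
    moreover have "poly (map_poly of_rat (cubic_poly a b c d)) z = 0"
      using assms by (simp add: cubic_roots_iff_poly)
    ultimately show False
      using nonzero_at_root_of_irreducible[OF irreducible] zero by (metis from_coords_as_poly)
  qed
  then show "u = 0 \<and> x = 0 \<and> y = 0"
    using a_nonzero by auto
qed (simp add: from_coords_def)

lemma from_coords_inject:
  assumes "z \<in> cubic_roots"
  shows "from_coords z u x y = from_coords z u' x' y' \<longleftrightarrow> u = u' \<and> x = x' \<and> y = y'"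
  using from_coords_eq_0_iff[OF assms, of "u - u'" "x - x'" "y - y'"]
  by (auto simp: from_coords_diff[symmetric])

lemma cubic_derivative_nonzero:
  assumes "z \<in> cubic_roots"
  shows "3 * of_int a * z^2 + 2 * of_int b * z + of_int c \<noteq> 0"
proof -
  have "pderiv (cubic_poly a b c d) \<noteq> 0" "degree (pderiv (cubic_poly a b c d)) < 3"
    using a_nonzero by (simp_all add: cubic_poly_def pderiv_pCons)
  then have "poly (map_poly of_rat (pderiv (cubic_poly a b c d))) z \<noteq> 0"
    using nonzero_at_root_of_irreducible[OF irreducible] assms
    by (simp add: cubic_roots_iff_poly degree_cubic_poly)
  then show ?thesis
    by (simp add: cubic_poly_def pderiv_pCons map_poly_pCons of_rat_mult algebra_simps power2_eq_square)
qed

lemma three_cubic_roots: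
  obtains r1 r2 r3 where "r1 \<noteq> r2" "r1 \<noteq> r3" "r2 \<noteq> r3" "cubic_roots = {r1, r2, r3}"
    "of_int b = - of_int a * (r1 + r2 + r3)" "of_int c = of_int a * (r1 * r2 + r1 * r3 + r2 * r3)"
    "of_int d = - of_int a * r1 * r2 * r3"
proof -
  obtain r1 r2 r3 :: complex where Vieta: "of_int b = - of_int a * (r1 + r2 + r3)"
    "of_int c = of_int a * (r1 * r2 + r1 * r3 + r2 * r3)" "of_int d = - of_int a * r1 * r2 * r3"
    using cubic_Vieta[of "of_int a" "of_int b" "of_int c" "of_int d"] a_nonzero by auto
  have "of_int a * z^3 + of_int b * z^2 + of_int c * z + of_int d
      = of_int a * ((z - r1) * (z - r2) * (z - r3))" for z :: complex
    unfolding Vieta by (simp add: algebra_simps power2_eq_square power3_eq_cube)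
  then have roots: "cubic_roots = {r1, r2, r3}"
    using a_nonzero by (auto simp: cubic_roots_def)
  have "3 * of_int a * z^2 + 2 * of_int b * z + of_int c
      = of_int a * ((z - r2) * (z - r3) + (z - r1) * (z - r3) + (z - r1) * (z - r2))" for z :: complex
    unfolding Vieta by (simp add: algebra_simps power2_eq_square)
  then have "of_int a * ((r - r2) * (r - r3) + (r - r1) * (r - r3) + (r - r1) * (r - r2)) \<noteq> 0"
    if "r \<in> {r1, r2, r3}" for r
    using cubic_derivative_nonzero[of r] roots that by simp
  from this[of r1] this[of r2] have "r1 \<noteq> r2 \<and> r1 \<noteq> r3 \<and> r2 \<noteq> r3"
    by auto
  then show ?thesis
    using that roots Vieta by blast
qed

definition coord_field :: "complex set" where
  "coord_field = {from_coords \<zeta> u x y | u x y. True}"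

lemma from_coords_in_coord_field [simp]: "from_coords \<zeta> u x y \<in> coord_field"
  by (auto simp: coord_field_def)

lemma coord_field_cases:
  assumes "v \<in> coord_field"
  obtains u x y where "v = from_coords \<zeta> u x y"
  using assms by (auto simp: coord_field_def)

lemma of_rat_in_coord_field: "of_rat q \<in> coord_field"
  using from_coords_in_coord_field[of q 0 0] by (simp add: from_coords_def)

lemma zeta_in_coord_field: "\<zeta> \<in> coord_field"
  using from_coords_in_coord_field[of 0 "1 / of_int a" 0] a_nonzero
  by (simp add: from_coords_def of_rat_divide)

lemma coord_field_add: "v \<in> coord_field \<Longrightarrow> w \<in> coord_field \<Longrightarrow> v + w \<in> coord_field"
  by (auto elim!: coord_field_cases simp: from_coords_add)

lemma coord_field_mult: "v \<in> coord_field \<Longrightarrow> w \<in> coord_field \<Longrightarrow> v * w \<in> coord_field"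
  by (auto elim!: coord_field_cases simp: from_coords_mult[OF zeta_in_cubic_roots])

lemma poly_of_rat_zeta_in_coord_field: "poly (map_poly of_rat p) \<zeta> \<in> coord_field"
  by (rule poly_map_poly_of_rat_mem)
    (simp_all add: of_rat_in_coord_field zeta_in_coord_field coord_field_add coord_field_mult)

lemma is_subfield_coord_field: "is_subfield coord_field"
  unfolding is_subfield_def
proof (intro conjI ballI)
  show "0 \<in> coord_field" "1 \<in> coord_field"
    using of_rat_in_coord_field[of 0] of_rat_in_coord_field[of 1] by simp_all
next
  fix v w
  assume v: "v \<in> coord_field" and w: "w \<in> coord_field"
  show "v + w \<in> coord_field" "v * w \<in> coord_field"
    using v w by (simp_all add: coord_field_add coord_field_mult)
  obtain u x y where v_eq: "v = from_coords \<zeta> u x y"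
    using v by (rule coord_field_cases)
  have "- v = from_coords \<zeta> (- u) (- x) (- y)"
    by (simp add: v_eq from_coords_def of_rat_minus algebra_simps)
  then show "- v \<in> coord_field"
    by simp
  show "inverse v \<in> coord_field"
  proof (cases "v = 0")
    case False
    then obtain h where "poly (map_poly of_rat h) \<zeta> * v = 1"
      using inverse_at_root_of_irreducible[OF irreducible] zeta_in_cubic_roots
      by (metis v_eq from_coords_as_poly cubic_roots_iff_poly)
    then have "inverse v = poly (map_poly of_rat h) \<zeta>"
      by (simp add: inverse_unique mult.commute)
    then show ?thesis
      by (simp add: poly_of_rat_zeta_in_coord_field)
  qed (use of_rat_in_coord_field[of 0] in simp)
qed

lemma Qadj_eq_coord_field: "Qadj \<zeta> = coord_field"
proof
  show "Qadj \<zeta> \<subseteq> coord_field"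
    unfolding Qadj_def using is_subfield_coord_field zeta_in_coord_field by blast
  show "coord_field \<subseteq> Qadj \<zeta>"
    unfolding Qadj_def coord_field_def by (auto simp: from_coords_as_poly subfield_poly_of_rat)
qed

lemma coords_from_coords: "coords a b \<zeta> (from_coords \<zeta> u x y) = (u, x, y)"
  unfolding coords_def from_coords_def[symmetric]
  by (rule the_equality) (auto simp: from_coords_inject[OF zeta_in_cubic_roots])

lemma Nof_from_coords: "Nof a b c d \<zeta> (from_coords \<zeta> u x y) = Nmat a b c d u x y"
  by (simp add: Nof_def coords_from_coords)

lemma bij_betw_Nof:
  "bij_betw (Nof a b c d \<zeta>) {from_coords \<zeta> u x y | u x y. (u, x, y) \<in> T}
     {Nmat a b c d u x y | u x y. (u, x, y) \<in> T}"
proof -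
  have "inj_on (Nof a b c d \<zeta>) {from_coords \<zeta> u x y | u x y. (u, x, y) \<in> T}"
    by (auto simp: inj_on_def Nof_from_coords Nmat_inject)
  moreover have "Nof a b c d \<zeta> ` {from_coords \<zeta> u x y | u x y. (u, x, y) \<in> T}
      = {Nmat a b c d u x y | u x y. (u, x, y) \<in> T}"
  proof (intro equalityI subsetI)
    fix M
    assume "M \<in> {Nmat a b c d u x y | u x y. (u, x, y) \<in> T}"
    then obtain u x y where "(u, x, y) \<in> T" "M = Nof a b c d \<zeta> (from_coords \<zeta> u x y)"
      by (auto simp: Nof_from_coords)
    then show "M \<in> Nof a b c d \<zeta> ` {from_coords \<zeta> u x y | u x y. (u, x, y) \<in> T}"
      by blast
  qed (force simp: Nof_from_coords)
  ultimately show ?thesis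
    by (simp add: bij_betw_def)
qed

lemma Nof_add:
  "v \<in> coord_field \<Longrightarrow> w \<in> coord_field \<Longrightarrow> Nof a b c d \<zeta> (v + w) = Nof a b c d \<zeta> v + Nof a b c d \<zeta> w"
  by (auto elim!: coord_field_cases simp: from_coords_add Nof_from_coords Nmat_add)

lemma Nof_mult:
  "v \<in> coord_field \<Longrightarrow> w \<in> coord_field \<Longrightarrow> Nof a b c d \<zeta> (v * w) = Nof a b c d \<zeta> v ** Nof a b c d \<zeta> w"
  by (auto elim!: coord_field_cases
      simp: from_coords_mult[OF zeta_in_cubic_roots] Nof_from_coords Nmat_mult[symmetric])

lemma Nof_1: "Nof a b c d \<zeta> 1 = mat 1"
  using Nof_from_coords[of 1 0 0] by (simp add: from_coords_def Nmat_1)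

context
  fixes \<sigma>
  assumes embedding: "\<sigma> \<in> embeddings coord_field"
begin

lemma embedding_from_coords: "\<sigma> (from_coords \<zeta> u x y) = from_coords (\<sigma> \<zeta>) u x y"
  unfolding from_coords_as_poly
  by (rule embedding_poly_of_rat[OF is_subfield_coord_field embedding zeta_in_coord_field])

lemma embedding_zeta_in_cubic_roots: "\<sigma> \<zeta> \<in> cubic_roots"
  using embedding_poly_of_rat[OF is_subfield_coord_field embedding zeta_in_coord_field,
      of "cubic_poly a b c d"] embedding_0[OF is_subfield_coord_field embedding] zeta_in_cubic_roots
  by (simp add: cubic_roots_iff_poly)

end

definition conjugate_embedding :: "complex \<Rightarrow> complex \<Rightarrow> complex" where
  "conjugate_embedding r v =
     (if v \<in> coord_field then case coords a b \<zeta> v of (u, x, y) \<Rightarrow> from_coords r u x y else 0)"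

lemma conjugate_embedding_from_coords:
  "conjugate_embedding r (from_coords \<zeta> u x y) = from_coords r u x y"
  by (simp add: conjugate_embedding_def coords_from_coords)

lemma conjugate_embedding_in_embeddings:
  assumes "r \<in> cubic_roots"
  shows "conjugate_embedding r \<in> embeddings coord_field"
  unfolding embeddings_def
proof (intro CollectI conjI ballI allI impI)
  show "conjugate_embedding r 1 = 1"
    using conjugate_embedding_from_coords[of r 1 0 0] by (simp add: from_coords_def)
  fix v w
  assume "v \<in> coord_field" "w \<in> coord_field"
  then obtain u x y u' x' y' where "v = from_coords \<zeta> u x y" "w = from_coords \<zeta> u' x' y'"
    by (metis coord_field_cases)
  then show "conjugate_embedding r (v + w) = conjugate_embedding r v + conjugate_embedding r w"
    "conjugate_embedding r (v * w) = conjugate_embedding r v * conjugate_embedding r w"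
    by (simp_all add: from_coords_add from_coords_mult zeta_in_cubic_roots assms
        conjugate_embedding_from_coords)
qed (simp add: conjugate_embedding_def)

lemma conjugate_embedding_zeta: "conjugate_embedding r \<zeta> = r"
  using conjugate_embedding_from_coords[of r 0 "1 / of_int a" 0] a_nonzero
  by (simp add: from_coords_def of_rat_divide)

lemma bij_betw_embeddings_cubic_roots: "bij_betw (\<lambda>\<sigma>. \<sigma> \<zeta>) (embeddings coord_field) cubic_roots"
proof (rule bij_betwI')
  fix \<sigma> \<tau>
  assume \<sigma>: "\<sigma> \<in> embeddings coord_field" and \<tau>: "\<tau> \<in> embeddings coord_field"
  show "\<sigma> \<zeta> = \<tau> \<zeta> \<longleftrightarrow> \<sigma> = \<tau>"
  proof
    assume same: "\<sigma> \<zeta> = \<tau> \<zeta>"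
    show "\<sigma> = \<tau>"
    proof
      fix v
      show "\<sigma> v = \<tau> v"
        using embedding_outside[OF is_subfield_coord_field \<sigma>, of v]
          embedding_outside[OF is_subfield_coord_field \<tau>, of v]
        by (cases "v \<in> coord_field")
          (auto elim!: coord_field_cases simp: embedding_from_coords[OF \<sigma>] embedding_from_coords[OF \<tau>] same)
    qed
  qed simp
next
  show "\<sigma> \<zeta> \<in> cubic_roots" if "\<sigma> \<in> embeddings coord_field" for \<sigma>
    using that by (rule embedding_zeta_in_cubic_roots)
  show "\<exists>\<sigma>\<in>embeddings coord_field. r = \<sigma> \<zeta>" if "r \<in> cubic_roots" for r
    using conjugate_embedding_in_embeddings[OF that] conjugate_embedding_zeta by metis
qed

lemma field_trace_from_coords:
  "field_trace coord_field (from_coords \<zeta> u x y) = of_rat (trace (Nmat a b c d u x y))"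
proof -
  obtain r1 r2 r3 where distinct: "r1 \<noteq> r2" "r1 \<noteq> r3" "r2 \<noteq> r3" and roots: "cubic_roots = {r1, r2, r3}"
    and Vieta: "of_int b = - of_int a * (r1 + r2 + r3)" "of_int c = of_int a * (r1 * r2 + r1 * r3 + r2 * r3)"
      "of_int d = - of_int a * r1 * r2 * r3"
    by (rule three_cubic_roots)
  have "field_trace coord_field (from_coords \<zeta> u x y) = (\<Sum>\<sigma>\<in>embeddings coord_field. from_coords (\<sigma> \<zeta>) u x y)"
    unfolding field_trace_def by (rule sum.cong) (simp_all add: embedding_from_coords)
  also have "\<dots> = (\<Sum>r\<in>cubic_roots. from_coords r u x y)"
    by (rule sum.reindex_bij_betw[OF bij_betw_embeddings_cubic_roots])
  also have "\<dots> = from_coords r1 u x y + from_coords r2 u x y + from_coords r3 u x y"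
    using distinct by (simp add: roots add.assoc)
  also have "\<dots> = of_rat (trace (Nmat a b c d u x y))"
    by (rule from_coords_sum_Vieta[OF Vieta])
  finally show ?thesis .
qed

lemma field_norm_from_coords:
  "field_norm coord_field (from_coords \<zeta> u x y) = of_rat (det (Nmat a b c d u x y))"
proof -
  obtain r1 r2 r3 where distinct: "r1 \<noteq> r2" "r1 \<noteq> r3" "r2 \<noteq> r3" and roots: "cubic_roots = {r1, r2, r3}"
    and Vieta: "of_int b = - of_int a * (r1 + r2 + r3)" "of_int c = of_int a * (r1 * r2 + r1 * r3 + r2 * r3)"
      "of_int d = - of_int a * r1 * r2 * r3"
    by (rule three_cubic_roots)
  have "field_norm coord_field (from_coords \<zeta> u x y) = (\<Prod>\<sigma>\<in>embeddings coord_field. from_coords (\<sigma> \<zeta>) u x y)"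
    unfolding field_norm_def by (rule prod.cong) (simp_all add: embedding_from_coords)
  also have "\<dots> = (\<Prod>r\<in>cubic_roots. from_coords r u x y)"
    by (rule prod.reindex_bij_betw[OF bij_betw_embeddings_cubic_roots])
  also have "\<dots> = from_coords r1 u x y * from_coords r2 u x y * from_coords r3 u x y"
    using distinct by (simp add: roots mult.assoc)
  also have "\<dots> = of_rat (det (Nmat a b c d u x y))"
    by (rule from_coords_prod_Vieta[OF Vieta])
  finally show ?thesis .
qed

end

theorem proposition2p2:
  fixes a b c d :: int and \<zeta> :: complex
  defines "K \<equiv> Qadj \<zeta>"
      and "\<rho> \<equiv> of_int a * \<zeta>"
      and "\<omega> \<equiv> of_int a * \<zeta>^2 + of_int b * \<zeta>"
  assumes irred: "a \<noteq> 0" "irreducible (cubic_poly a b c d)"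
      and root: "of_int a * \<zeta>^3 + of_int b * \<zeta>^2 + of_int c * \<zeta> + of_int d = 0"
      and canonical_basis:
        "ring_of_integers K = {of_int u + of_int x * \<rho> + of_int y * \<omega> | u x y :: int. True}"
  shows "bij_betw (Nof a b c d \<zeta>) (ring_of_integers K)
           {Nmat a b c d (of_int u) (of_int x) (of_int y) | u x y :: int. True}
       \<and> (\<forall>\<alpha>\<in>ring_of_integers K. \<forall>\<beta>\<in>ring_of_integers K.
            Nof a b c d \<zeta> (\<alpha> + \<beta>) = Nof a b c d \<zeta> \<alpha> + Nof a b c d \<zeta> \<beta>
          \<and> Nof a b c d \<zeta> (\<alpha> * \<beta>) = Nof a b c d \<zeta> \<alpha> ** Nof a b c d \<zeta> \<beta>)
       \<and> Nof a b c d \<zeta> 1 = mat 1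
       \<and> bij_betw (Nof a b c d \<zeta>) K {Nmat a b c d u x y | u x y :: rat. True}
       \<and> (\<forall>\<alpha>\<in>K. \<forall>\<beta>\<in>K.
            Nof a b c d \<zeta> (\<alpha> + \<beta>) = Nof a b c d \<zeta> \<alpha> + Nof a b c d \<zeta> \<beta>
          \<and> Nof a b c d \<zeta> (\<alpha> * \<beta>) = Nof a b c d \<zeta> \<alpha> ** Nof a b c d \<zeta> \<beta>)
       \<and> (\<forall>\<alpha>\<in>K. field_trace K \<alpha> = of_rat (trace (Nof a b c d \<zeta> \<alpha>))
                \<and> field_norm K \<alpha> = of_rat (det (Nof a b c d \<zeta> \<alpha>)))"
proof -
  interpret cubic_field a b c d \<zeta>
    using irred root by unfold_locales
  define T :: "(rat \<times> rat \<times> rat) set" where "T = {(of_int u, of_int x, of_int y) | u x y. True}"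
  have K: "K = coord_field"
    unfolding K_def by (rule Qadj_eq_coord_field)
  have O: "ring_of_integers K = {from_coords \<zeta> u x y | u x y. (u, x, y) \<in> T}"
    unfolding canonical_basis T_def \<rho>_def \<omega>_def from_coords_def by force
  have O_matrices: "{Nmat a b c d (of_int u) (of_int x) (of_int y) | u x y :: int. True}
      = {Nmat a b c d u x y | u x y. (u, x, y) \<in> T}"
    unfolding T_def by blast
  have "ring_of_integers K \<subseteq> coord_field"
    unfolding K ring_of_integers_def by blast
  moreover have "bij_betw (Nof a b c d \<zeta>) coord_field {Nmat a b c d u x y | u x y :: rat. True}"
    using bij_betw_Nof[of UNIV] by (simp add: coord_field_def)
  moreover have "field_trace coord_field \<alpha> = of_rat (trace (Nof a b c d \<zeta> \<alpha>))
      \<and> field_norm coord_field \<alpha> = of_rat (det (Nof a b c d \<zeta> \<alpha>))" if "\<alpha> \<in> coord_field" for \<alpha>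
    using that by (auto elim!: coord_field_cases
        simp: field_trace_from_coords field_norm_from_coords Nof_from_coords)
  ultimately show ?thesis
    using bij_betw_Nof[of T] Nof_add Nof_mult Nof_1 unfolding O_matrices O[symmetric] K
    by blast
qed

end
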